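(* Let $(X,d_X)$ and $(Y,d_Y)$ be ultrametric spaces and let $d$ be a partial distance-preserving metric on $X\times Y$ with $d_\infty\le d$. Suppose that $d((x_1,y_1),(x_2,y_2))=d((x_2,y_1),(x_1,y_2))$ for all $x_1,x_2\in X$ and $y_1,y_2\in Y$. Then $(X\times Y,d)$ is ultrametric if and only if $\mathcal N_\varepsilon(W\times Z)=\mathcal N_\varepsilon(W)\cdot\mathcal N_\varepsilon(Z)$ for all compact sets $W\subseteq X$, $Z\subseteq Y$ and every $\varepsilon>0$ (quantities computed in $(X,d_X)$, $(Y,d_Y)$, $(X\times Y,d)$ respectively).
   Context: $d_\infty((x_1,y_1),(x_2,y_2))=\max\{d_X(x_1,x_2),d_Y(y_1,y_2)\}$. A metric $d$ on $X\times Y$ is partial distance-preserving if $d((x_1,y),(x_2,y))=d_X(x_1,x_2)$ and $d((x,y_1),(x,y_2))=d_Y(y_1,y_2)$ for all $x,x_1,x_2\in X$, $y,y_1,y_2\in Y$. Ultrametric: $\rho(a,b)\le\max\{\rho(a,c),\rho(c,b)\}$. In a metric space $(M,\rho)$ with closed balls $B(c,r)=\{x:\rho(x,c)\le r\}$, $C$ is an $\varepsilon$-net for $V$ if $V\subseteq\bigcup_{c\in C}B(c,\varepsilon)$, and for totally bounded $V$ the covering number $\mathcal N_\varepsilon(V)$ is the smallest cardinality of a subset of $V$ that is an $\varepsilon$-net for $V$. *)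

theory Defs
  imports "HOL-Analysis.Analysis"
begin

text \<open>A metric space is represented as a carrier set M with a distance d
  satisfying the library locale Metric_space M d.\<close>

definition ultrametric :: "'a set \<Rightarrow> ('a \<Rightarrow> 'a \<Rightarrow> real) \<Rightarrow> bool" where
  "ultrametric M d \<longleftrightarrow> (\<forall>a\<in>M. \<forall>b\<in>M. \<forall>c\<in>M. d a b \<le> max (d a c) (d c b))"

definition is_net :: "'a set \<Rightarrow> ('a \<Rightarrow> 'a \<Rightarrow> real) \<Rightarrow> real \<Rightarrow> 'a set \<Rightarrow> 'a set \<Rightarrow> bool" where
  "is_net M d eps V C \<longleftrightarrow> V \<subseteq> (\<Union>c\<in>C. {x\<in>M. d x c \<le> eps})"

definition covering_number :: "'a set \<Rightarrow> ('a \<Rightarrow> 'a \<Rightarrow> real) \<Rightarrow> real \<Rightarrow> 'a set \<Rightarrow> nat" where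
  "covering_number M d eps V =
     (LEAST n. \<exists>C. finite C \<and> card C = n \<and> C \<subseteq> V \<and> is_net M d eps V C)"

definition partial_distance_preserving ::
  "'a set \<Rightarrow> ('a \<Rightarrow> 'a \<Rightarrow> real) \<Rightarrow> 'b set \<Rightarrow> ('b \<Rightarrow> 'b \<Rightarrow> real) \<Rightarrow> ('a \<times> 'b \<Rightarrow> 'a \<times> 'b \<Rightarrow> real) \<Rightarrow> bool" where
  "partial_distance_preserving X dX Y dY d \<longleftrightarrow>
     (\<forall>x1\<in>X. \<forall>x2\<in>X. \<forall>y\<in>Y. d (x1, y) (x2, y) = dX x1 x2) \<and>
     (\<forall>x\<in>X. \<forall>y1\<in>Y. \<forall>y2\<in>Y. d (x, y1) (x, y2) = dY y1 y2)"

end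

theory Submission
  imports Defs
begin

(* Under the hypotheses (partial distance preservation and
   d_inf \<le> d), the product (X \<times> Y, d) is ultrametric iff d coincides with the
   max-metric d_inf.
   (=>) In an ultrametric space the closed eps-balls relative to a set W form a
   partition of W, and the covering number N_eps(W) is exactly the number of
   these balls; it is finite when W is compact.  For d = d_inf the relative
   balls of W \<times> Z are precisely the products of relative balls of W and of Z,
   so the counts multiply.
   (<=) If d exceeds d_inf at some pair of points (x1,y1), (x2,y2), put
   m = d_inf((x1,y1),(x2,y2)).  Then N_m({x1,x2}) = N_m({y1,y2}) = 1, whereas by
   the swap symmetry of d every point of {x1,x2} \<times> {y1,y2} is at distance > m
   from another one, so N_m({x1,x2} \<times> {y1,y2}) \<noteq> 1: multiplicativity fails. *)

definition rel_cball :: "('a \<Rightarrow> 'a \<Rightarrow> real) \<Rightarrow> real \<Rightarrow> 'a set \<Rightarrow> 'a \<Rightarrow> 'a set" where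
  "rel_cball d eps W x = {y\<in>W. d x y \<le> eps}"

lemma rel_cball_centre:
  assumes "Metric_space M d" "W \<subseteq> M" "w \<in> W" "eps \<ge> 0"
  shows "w \<in> rel_cball d eps W w"
  using assms Metric_space.mdist_zero unfolding rel_cball_def by fastforce

text \<open>In an ultrametric space every point of a closed ball is a centre of it;
  hence the relative balls partition W.\<close>
lemma rel_cball_eq:
  assumes ms: "Metric_space M d" and u: "ultrametric M d" and W: "W \<subseteq> M"
    and ab: "a \<in> M" "b \<in> M" "d a b \<le> eps"
  shows "rel_cball d eps W a = rel_cball d eps W b"
proof -
  have ba: "d b a \<le> eps" using ab Metric_space.commute[OF ms] by metis
  have "d b y \<le> eps \<longleftrightarrow> d a y \<le> eps" if "y \<in> W" for y
  proof -
    have "d b y \<le> max (d b a) (d a y)" "d a y \<le> max (d a b) (d b y)"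
      using u ab W that unfolding ultrametric_def by blast+
    then show ?thesis using ab ba by linarith
  qed
  then show ?thesis unfolding rel_cball_def by blast
qed

text \<open>Consequently, in an ultrametric space the covering number of W equals
  the number of distinct relative eps-balls: one centre per ball is a
  minimal net, and any net must meet every ball.\<close>
lemma covering_number_ultrametric:
  assumes ms: "Metric_space M d" and u: "ultrametric M d" and WM: "W \<subseteq> M"
    and fin: "finite (rel_cball d eps W ` W)" and e: "eps \<ge> 0"
  shows "covering_number M d eps W = card (rel_cball d eps W ` W)"
proof -
  let ?P = "rel_cball d eps W ` W"
  let ?Q = "\<lambda>n. \<exists>C. finite C \<and> card C = n \<and> C \<subseteq> W \<and> is_net M d eps W C"
  define centre where "centre A = (SOME x. x \<in> A)" for A :: "'a set"
  have centre: "centre A \<in> A" if "A \<in> ?P" for A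
    using that rel_cball_centre[OF ms WM _ e] unfolding centre_def by (metis imageE someI)
  have Q_centres: "?Q (card (centre ` ?P))"
  proof (intro exI conjI)
    show "centre ` ?P \<subseteq> W" using centre unfolding rel_cball_def by blast
    show "is_net M d eps W (centre ` ?P)"
      unfolding is_net_def using centre WM unfolding rel_cball_def by blast
  qed (use fin in simp_all)
  have le: "covering_number M d eps W \<le> card ?P"
    using Least_le[of ?Q, OF Q_centres] card_image_le[OF fin, of centre]
    unfolding covering_number_def by linarith
  have ge: "card ?P \<le> n" if "?Q n" for n
  proof -
    obtain D where D: "finite D" "card D = n" "D \<subseteq> W" "is_net M d eps W D"
      using \<open>?Q n\<close> by blast
    have "?P \<subseteq> rel_cball d eps W ` D"
    proof
      fix A assume "A \<in> ?P"
      then obtain w where w: "w \<in> W" "A = rel_cball d eps W w" by blast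
      then obtain c where c: "c \<in> D" "d w c \<le> eps" using D(4) unfolding is_net_def by blast
      then have "A = rel_cball d eps W c"
        using w rel_cball_eq[OF ms u WM] WM D(3) by blast
      then show "A \<in> rel_cball d eps W ` D" using c by blast
    qed
    then have "card ?P \<le> card (rel_cball d eps W ` D)" using D(1) by (simp add: card_mono)
    also have "\<dots> \<le> card D" using D(1) by (rule card_image_le)
    finally show ?thesis using D(2) by simp
  qed
  have "?Q (covering_number M d eps W)"
    unfolding covering_number_def using LeastI[of ?Q, OF Q_centres] .
  with le ge show ?thesis by (meson le_antisym)
qed

text \<open>A compact set in an ultrametric space has only finitely many relative
  eps-balls (eps > 0): total boundedness gives a finite set of centres.\<close>
lemma finite_rel_cballs_compact:
  assumes ms: "Metric_space M d" and u: "ultrametric M d"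
    and c: "compactin (Metric_space.mtopology M d) W" and e: "eps > 0"
  shows "finite (rel_cball d eps W ` W)"
proof -
  have WM: "W \<subseteq> M"
    using compactin_subset_topspace[OF c] Metric_space.topspace_mtopology[OF ms] by simp
  obtain K where K: "finite K" "K \<subseteq> W" "W \<subseteq> (\<Union>x\<in>K. Metric_space.mball M d x eps)"
    using Metric_space.compactin_imp_mtotally_bounded[OF ms c] e
    unfolding Metric_space.mtotally_bounded_def[OF ms] by meson
  have "rel_cball d eps W ` W \<subseteq> rel_cball d eps W ` K"
  proof
    fix A assume "A \<in> rel_cball d eps W ` W"
    then obtain w where w: "w \<in> W" "A = rel_cball d eps W w" by blast
    then obtain k where k: "k \<in> K" "d k w < eps"
      using K(3) Metric_space.in_mball[OF ms] by blast
    then have "rel_cball d eps W k = A"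
      using w rel_cball_eq[OF ms u WM, of k w eps] K(2) WM by auto
    then show "A \<in> rel_cball d eps W ` K" using k by blast
  qed
  then show ?thesis using K(1) finite_subset by blast
qed

lemma covering_number_eq_1:
  assumes "a \<in> W" "W \<subseteq> M" "\<forall>w\<in>W. d w a \<le> eps"
  shows "covering_number M d eps W = 1"
  unfolding covering_number_def
proof (rule Least_equality)
  show "\<exists>C. finite C \<and> card C = 1 \<and> C \<subseteq> W \<and> is_net M d eps W C"
    using assms by (intro exI[of _ "{a}"]) (auto simp: is_net_def)
  fix n assume "\<exists>C. finite C \<and> card C = n \<and> C \<subseteq> W \<and> is_net M d eps W C"
  then show "1 \<le> n" using assms unfolding is_net_def by (cases "n = 0") auto
qed

lemma covering_number_neq_1:
  assumes ms: "Metric_space M d" and fin: "finite W" and WM: "W \<subseteq> M" and e: "eps \<ge> 0"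
    and far: "\<forall>c\<in>W. \<exists>w\<in>W. d w c > eps"
  shows "covering_number M d eps W \<noteq> 1"
proof
  let ?Q = "\<lambda>n. \<exists>C. finite C \<and> card C = n \<and> C \<subseteq> W \<and> is_net M d eps W C"
  have "is_net M d eps W W"
    unfolding is_net_def using WM e Metric_space.mdist_zero[OF ms] by fastforce
  then have "?Q (covering_number M d eps W)"
    unfolding covering_number_def using fin by (intro LeastI[of ?Q "card W"]) blast
  moreover assume "covering_number M d eps W = 1"
  ultimately obtain c where "c \<in> W" "\<forall>w\<in>W. d w c \<le> eps"
    unfolding is_net_def by (auto simp: card_Suc_eq)
  then show False using far by force
qed

text \<open>Forming products of nonempty sets is injective, so it preserves counts.\<close>
lemma card_Times_image:
  assumes "finite P" "finite Q" "{} \<notin> P" "{} \<notin> Q"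
  shows "card ((\<lambda>(A, B). A \<times> B) ` (P \<times> Q)) = card P * card Q"
proof -
  have "inj_on (\<lambda>(A, B). A \<times> B) (P \<times> Q)"
    using assms(3,4) by (auto intro!: inj_onI simp: times_eq_iff)
  then show ?thesis by (simp add: card_image card_cartesian_product)
qed

lemma ultrametric_max_metric:
  assumes uX: "ultrametric X dX" and uY: "ultrametric Y dY"
    and dmax: "\<forall>x1\<in>X. \<forall>x2\<in>X. \<forall>y1\<in>Y. \<forall>y2\<in>Y. d (x1, y1) (x2, y2) = max (dX x1 x2) (dY y1 y2)"
  shows "ultrametric (X \<times> Y) d"
  unfolding ultrametric_def
proof (clarify)
  fix a1 a2 b1 b2 c1 c2
  assume h: "a1 \<in> X" "a2 \<in> Y" "b1 \<in> X" "b2 \<in> Y" "c1 \<in> X" "c2 \<in> Y"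
  have "dX a1 b1 \<le> max (dX a1 c1) (dX c1 b1)" "dY a2 b2 \<le> max (dY a2 c2) (dY c2 b2)"
    using uX uY h unfolding ultrametric_def by blast+
  then show "d (a1, a2) (b1, b2) \<le> max (d (a1, a2) (c1, c2)) (d (c1, c2) (b1, b2))"
    using dmax h by (simp add: le_max_iff_disj) linarith
qed

text \<open>Covering numbers are multiplicative for the max-metric on a product of
  ultrametric spaces: relative balls of W \<times> Z are products of relative balls.\<close>
lemma covering_number_Times_max:
  assumes msX: "Metric_space X dX" and uX: "ultrametric X dX"
    and msY: "Metric_space Y dY" and uY: "ultrametric Y dY"
    and ms: "Metric_space (X \<times> Y) d"
    and dmax: "\<forall>x1\<in>X. \<forall>x2\<in>X. \<forall>y1\<in>Y. \<forall>y2\<in>Y. d (x1, y1) (x2, y2) = max (dX x1 x2) (dY y1 y2)"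
    and cW: "compactin (Metric_space.mtopology X dX) W"
    and cZ: "compactin (Metric_space.mtopology Y dY) Z" and e: "eps > 0"
  shows "covering_number (X \<times> Y) d eps (W \<times> Z) =
           covering_number X dX eps W * covering_number Y dY eps Z"
proof -
  have u: "ultrametric (X \<times> Y) d" using ultrametric_max_metric[OF uX uY dmax] .
  have WX: "W \<subseteq> X" using compactin_subset_topspace[OF cW] Metric_space.topspace_mtopology[OF msX] by simp
  have ZY: "Z \<subseteq> Y" using compactin_subset_topspace[OF cZ] Metric_space.topspace_mtopology[OF msY] by simp
  let ?PW = "rel_cball dX eps W ` W" and ?PZ = "rel_cball dY eps Z ` Z"
  have fW: "finite ?PW" using finite_rel_cballs_compact[OF msX uX cW e] .
  have fZ: "finite ?PZ" using finite_rel_cballs_compact[OF msY uY cZ e] .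
  have ball_Times: "rel_cball d eps (W \<times> Z) (w, z) = rel_cball dX eps W w \<times> rel_cball dY eps Z z"
    if "w \<in> W" "z \<in> Z" for w z
  proof -
    have "d (w, z) (a, b) = max (dX w a) (dY z b)" if "a \<in> W" "b \<in> Z" for a b
      using that \<open>w \<in> W\<close> \<open>z \<in> Z\<close> WX ZY dmax by blast
    then show ?thesis unfolding rel_cball_def by auto
  qed
  have P: "rel_cball d eps (W \<times> Z) ` (W \<times> Z) = (\<lambda>(A, B). A \<times> B) ` (?PW \<times> ?PZ)"
  proof -
    have "rel_cball d eps (W \<times> Z) ` (W \<times> Z)
            = (\<lambda>(A, B). A \<times> B) ` (map_prod (rel_cball dX eps W) (rel_cball dY eps Z) ` (W \<times> Z))"
      by (auto simp: ball_Times image_image split_def intro!: image_cong)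
    then show ?thesis by (simp add: map_prod_surj_on)
  qed
  have ne: "{} \<notin> ?PW" "{} \<notin> ?PZ"
    using rel_cball_centre[OF msX WX _, of _ eps] rel_cball_centre[OF msY ZY _, of _ eps] e
    by (metis empty_iff imageE less_imp_le)+
  have "covering_number (X \<times> Y) d eps (W \<times> Z) = card (rel_cball d eps (W \<times> Z) ` (W \<times> Z))"
  proof (rule covering_number_ultrametric[OF ms u])
    show "finite (rel_cball d eps (W \<times> Z) ` (W \<times> Z))" unfolding P using fW fZ by simp
  qed (use WX ZY e in auto)
  also have "\<dots> = card ?PW * card ?PZ"
    unfolding P using card_Times_image[OF fW fZ ne] .
  also have "\<dots> = covering_number X dX eps W * covering_number Y dY eps Z"
    using covering_number_ultrametric[OF msX uX WX fW] covering_number_ultrametric[OF msY uY ZY fZ] e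
    by simp
  finally show ?thesis .
qed

text \<open>Conversely, an ultrametric on X \<times> Y that is partial distance-preserving
  and dominates the max-metric must equal it: go through the corner (x2, y1).\<close>
lemma ultrametric_imp_max_metric:
  assumes u: "ultrametric (X \<times> Y) d"
    and pdp: "partial_distance_preserving X dX Y dY d"
    and dom: "\<forall>x1\<in>X. \<forall>x2\<in>X. \<forall>y1\<in>Y. \<forall>y2\<in>Y. max (dX x1 x2) (dY y1 y2) \<le> d (x1, y1) (x2, y2)"
  shows "\<forall>x1\<in>X. \<forall>x2\<in>X. \<forall>y1\<in>Y. \<forall>y2\<in>Y. d (x1, y1) (x2, y2) = max (dX x1 x2) (dY y1 y2)"
proof (intro ballI)
  fix x1 x2 y1 y2 assume h: "x1 \<in> X" "x2 \<in> X" "y1 \<in> Y" "y2 \<in> Y"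
  have "d (x1, y1) (x2, y2) \<le> max (d (x1, y1) (x2, y1)) (d (x2, y1) (x2, y2))"
    using u h unfolding ultrametric_def by blast
  also have "\<dots> = max (dX x1 x2) (dY y1 y2)"
    using pdp h unfolding partial_distance_preserving_def by simp
  finally show "d (x1, y1) (x2, y2) = max (dX x1 x2) (dY y1 y2)"
    using dom h by (meson order_antisym)
qed

text \<open>The obstruction: if d strictly exceeds the max-metric at two points,
  then with m their max-distance, the square {x1,x2} \<times> {y1,y2} has covering
  number \<noteq> 1 at scale m while both sides have covering number 1.  The swap
  symmetry of d supplies, for each corner, a corner at distance > m.\<close>
lemma covering_number_square_not_multiplicative:
  assumes msX: "Metric_space X dX" and msY: "Metric_space Y dY"
    and ms: "Metric_space (X \<times> Y) d"
    and pdp: "partial_distance_preserving X dX Y dY d"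
    and swap: "\<forall>x1\<in>X. \<forall>x2\<in>X. \<forall>y1\<in>Y. \<forall>y2\<in>Y. d (x1, y1) (x2, y2) = d (x2, y1) (x1, y2)"
    and h: "x1 \<in> X" "x2 \<in> X" "y1 \<in> Y" "y2 \<in> Y"
    and gt: "d (x1, y1) (x2, y2) > max (dX x1 x2) (dY y1 y2)"
  defines "m \<equiv> max (dX x1 x2) (dY y1 y2)"
  shows "m > 0"
    and "covering_number X dX m {x1, x2} = 1" and "covering_number Y dY m {y1, y2} = 1"
    and "covering_number (X \<times> Y) d m ({x1, x2} \<times> {y1, y2}) \<noteq> 1"
proof -
  have "x1 \<noteq> x2"
  proof
    assume "x1 = x2"
    then have "d (x1, y1) (x2, y2) = dY y1 y2"
      using pdp h unfolding partial_distance_preserving_def by simp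
    then show False using gt by simp
  qed
  then have "dX x1 x2 > 0"
    using Metric_space.zero[OF msX h(1,2)] Metric_space.nonneg[OF msX] by (metis less_eq_real_def)
  then show m: "m > 0" unfolding m_def by simp
  show "covering_number X dX m {x1, x2} = 1"
    using h m Metric_space.mdist_zero[OF msX] Metric_space.commute[OF msX]
    by (intro covering_number_eq_1[of x1]) (auto simp: m_def)
  show "covering_number Y dY m {y1, y2} = 1"
    using h m Metric_space.mdist_zero[OF msY] Metric_space.commute[OF msY]
    by (intro covering_number_eq_1[of y1]) (auto simp: m_def)
  have d11: "d (x1, y1) (x2, y2) > m" using gt unfolding m_def .
  have d22: "d (x2, y2) (x1, y1) > m"
    using d11 h Metric_space.commute[OF ms, of "(x1, y1)" "(x2, y2)"] by simp
  have d21: "d (x2, y1) (x1, y2) > m" using d11 swap h by metis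
  have d12: "d (x1, y2) (x2, y1) > m"
    using d21 h Metric_space.commute[OF ms, of "(x1, y2)" "(x2, y1)"] by simp
  have far: "\<forall>c\<in>{x1, x2} \<times> {y1, y2}. \<exists>w\<in>{x1, x2} \<times> {y1, y2}. d w c > m"
  proof
    fix c assume "c \<in> {x1, x2} \<times> {y1, y2}"
    then consider "c = (x1, y1)" | "c = (x2, y2)" | "c = (x1, y2)" | "c = (x2, y1)" by blast
    then show "\<exists>w\<in>{x1, x2} \<times> {y1, y2}. d w c > m"
    proof cases
      case 1 with d22 show ?thesis by blast
    next
      case 2 with d11 show ?thesis by blast
    next
      case 3 with d21 show ?thesis by blast
    next
      case 4 with d12 show ?thesis by blast
    qed
  qed
  show "covering_number (X \<times> Y) d m ({x1, x2} \<times> {y1, y2}) \<noteq> 1"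
    by (rule covering_number_neq_1[OF ms _ _ _ far]) (use h m in auto)
qed

theorem corollary4p8:
  fixes X :: "'a set" and dX :: "'a \<Rightarrow> 'a \<Rightarrow> real"
    and Y :: "'b set" and dY :: "'b \<Rightarrow> 'b \<Rightarrow> real"
    and d :: "'a \<times> 'b \<Rightarrow> 'a \<times> 'b \<Rightarrow> real"
  assumes "Metric_space X dX" and "ultrametric X dX"
    and "Metric_space Y dY" and "ultrametric Y dY"
    and "Metric_space (X \<times> Y) d"
    and "partial_distance_preserving X dX Y dY d"
    and "\<forall>x1\<in>X. \<forall>x2\<in>X. \<forall>y1\<in>Y. \<forall>y2\<in>Y.
           max (dX x1 x2) (dY y1 y2) \<le> d (x1, y1) (x2, y2)"
    and "\<forall>x1\<in>X. \<forall>x2\<in>X. \<forall>y1\<in>Y. \<forall>y2\<in>Y.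
           d (x1, y1) (x2, y2) = d (x2, y1) (x1, y2)"
  shows "ultrametric (X \<times> Y) d \<longleftrightarrow>
    (\<forall>W Z eps. compactin (Metric_space.mtopology X dX) W \<and>
               compactin (Metric_space.mtopology Y dY) Z \<and> eps > 0 \<longrightarrow>
       covering_number (X \<times> Y) d eps (W \<times> Z) =
         covering_number X dX eps W * covering_number Y dY eps Z)"
proof
  assume u: "ultrametric (X \<times> Y) d"
  then show "\<forall>W Z eps. compactin (Metric_space.mtopology X dX) W \<and>
               compactin (Metric_space.mtopology Y dY) Z \<and> eps > 0 \<longrightarrow>
       covering_number (X \<times> Y) d eps (W \<times> Z) =
         covering_number X dX eps W * covering_number Y dY eps Z"
    using covering_number_Times_max[OF assms(1-5) ultrametric_imp_max_metric[OF u assms(6,7)]]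
    by blast
next
  assume mult: "\<forall>W Z eps. compactin (Metric_space.mtopology X dX) W \<and>
               compactin (Metric_space.mtopology Y dY) Z \<and> eps > 0 \<longrightarrow>
       covering_number (X \<times> Y) d eps (W \<times> Z) =
         covering_number X dX eps W * covering_number Y dY eps Z"
  have "d (x1, y1) (x2, y2) = max (dX x1 x2) (dY y1 y2)"
    if h: "x1 \<in> X" "x2 \<in> X" "y1 \<in> Y" "y2 \<in> Y" for x1 x2 y1 y2
  proof (rule ccontr)
    assume "d (x1, y1) (x2, y2) \<noteq> max (dX x1 x2) (dY y1 y2)"
    then have gt: "d (x1, y1) (x2, y2) > max (dX x1 x2) (dY y1 y2)"
      using assms(7) h by force
    have "compactin (Metric_space.mtopology X dX) {x1, x2}"
      "compactin (Metric_space.mtopology Y dY) {y1, y2}"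
      using h Metric_space.topspace_mtopology[OF assms(1)] Metric_space.topspace_mtopology[OF assms(3)]
      by (auto intro: finite_imp_compactin)
    then show False
      using mult covering_number_square_not_multiplicative[OF assms(1,3,5,6,8) h gt] by fastforce
  qed
  then show "ultrametric (X \<times> Y) d"
    using ultrametric_max_metric[OF assms(2,4)] by blast
qed

end
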